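(* Let $A$ be an Archimedean semiprime $f$-algebra which is relatively uniformly complete. Then $A$ is bounded quasi-inversion closed, i.e., for every $a\in A$ with $|a|\le|a^2-a|$ there exists $a^\ast\in A$ with $a+a^\ast=aa^\ast$.
   Context: An $f$-algebra is a real associative algebra that is a vector lattice with $A_+A_+\subseteq A_+$ and such that $a\wedge b=0$ implies $ac\wedge b=ca\wedge b=0$ for all $c\in A_+$; it is semiprime if $0$ is its only nilpotent element. Relative uniform completeness is the standard notion for vector lattices. *)

theory Defs
  imports Complex_Main
begin

text \<open>Elements of a real vector lattice carrying an associative (not necessarily unital)
real algebra structure are modelled by a type of class
{real_algebra, ordered_real_vector, lattice}; the order is shared by all classes.\<close>

definition vabs :: "'a::{ordered_real_vector, lattice} \<Rightarrow> 'a" where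
  "vabs a = sup a (- a)"

definition archimedean_vl :: "'a::{ordered_real_vector, lattice} itself \<Rightarrow> bool" where
  "archimedean_vl _ \<longleftrightarrow>
     (\<forall>u v :: 'a. 0 \<le> u \<and> 0 \<le> v \<and> (\<forall>n::nat. real n *\<^sub>R u \<le> v) \<longrightarrow> u = 0)"

definition ru_converges :: "(nat \<Rightarrow> 'a::{ordered_real_vector, lattice}) \<Rightarrow> 'a \<Rightarrow> bool" where
  "ru_converges x l \<longleftrightarrow>
     (\<exists>e. 0 \<le> e \<and> (\<forall>\<epsilon>::real. \<epsilon> > 0 \<longrightarrow>
        (\<exists>N. \<forall>n\<ge>N. vabs (x n - l) \<le> \<epsilon> *\<^sub>R e)))"

definition ru_cauchy :: "(nat \<Rightarrow> 'a::{ordered_real_vector, lattice}) \<Rightarrow> bool" where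
  "ru_cauchy x \<longleftrightarrow>
     (\<exists>e. 0 \<le> e \<and> (\<forall>\<epsilon>::real. \<epsilon> > 0 \<longrightarrow>
        (\<exists>N. \<forall>m\<ge>N. \<forall>n\<ge>N. vabs (x m - x n) \<le> \<epsilon> *\<^sub>R e)))"

definition ru_complete :: "'a::{ordered_real_vector, lattice} itself \<Rightarrow> bool" where
  "ru_complete _ \<longleftrightarrow> (\<forall>x :: nat \<Rightarrow> 'a. ru_cauchy x \<longrightarrow> (\<exists>l. ru_converges x l))"

definition f_algebra :: "'a::{real_algebra, ordered_real_vector, lattice} itself \<Rightarrow> bool" where
  "f_algebra _ \<longleftrightarrow>
     (\<forall>a b :: 'a. 0 \<le> a \<and> 0 \<le> b \<longrightarrow> 0 \<le> a * b) \<and>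
     (\<forall>a b c :: 'a. inf a b = 0 \<and> 0 \<le> c \<longrightarrow> inf (a * c) b = 0 \<and> inf (c * a) b = 0)"

text \<open>Positive powers in a possibly non-unital ring: npow a n = a^(n+1).\<close>
fun npow :: "'a::semigroup_mult \<Rightarrow> nat \<Rightarrow> 'a" where
  "npow a 0 = a"
| "npow a (Suc n) = a * npow a n"

definition semiprime :: "'a::{ring} itself \<Rightarrow> bool" where
  "semiprime _ \<longleftrightarrow> (\<forall>a :: 'a. (\<exists>n. npow a n = 0) \<longrightarrow> a = 0)"

end

(*
  By semiprimeness, |a| <= |a^2 - a| already forces |a| <= a^2 - a, so a + a - a^2 <= 0, and a
  quasi-inverse of a is built from one of the non-positive element a + a - a^2 =: -q, i.e. from
  a solution of x + q x = q (formally x = q/(1 + q)).  Where q <= v, 1/(1 + q) is the geometric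
  series sum_k c^(k+1) (v - q)^k with c = 1/(v + 1).  Its terms q ((v - q)^+)^k can be built
  without a unit, and semiprimeness makes their partial sums telescope, which solves
  x + q x = q up to an error of size (q^2 + q)/(v + 1).  As v grows these approximate solutions
  form a relatively uniform Cauchy sequence, because |y| <= |y + q y|, and by the Archimedean
  property the limit solves the equation exactly.
*)

theory Submission
  imports Defs "HOL-Library.Lattice_Algebras"
begin

interpretation vl: lattice_ab_group_add "(+)" "0::'a::{ordered_real_vector, lattice}" "(-)" uminus
    "(\<le>)" "(<)" inf sup
  by unfold_locales

(* vl.nprt x = inf x 0 is the non-positive part, so the negative part is - vl.nprt x. *)

lemma pprt_diff_pprt_uminus: "vl.pprt x - vl.pprt (- x) = x"
  by (metis vl.prts vl.pprt_neg diff_minus_eq_add)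

lemma inf_pprt_neg_nprt: "inf (vl.pprt x) (- vl.nprt x) = 0"
proof -
  have "inf (vl.pprt x) (- vl.nprt x) + vl.nprt x = inf (vl.pprt x + vl.nprt x) 0"
    by (simp add: vl.add_inf_distrib_right)
  also have "\<dots> = vl.nprt x"
    by (metis vl.prts vl.nprt_def)
  finally show ?thesis by simp
qed

lemma vabs_eq_pprt_minus_nprt: "vabs x = vl.pprt x - vl.nprt x"
proof -
  have "vl.pprt x - vl.nprt x = sup (x - vl.nprt x) (- vl.nprt x)"
    using vl.add_sup_distrib_right[of x 0 "- vl.nprt x"] by (simp add: vl.pprt_def)
  also have "x - vl.nprt x = vl.pprt x"
    using vl.prts[of x] by (simp add: algebra_simps)
  also have "sup (vl.pprt x) (- vl.nprt x) = sup (sup x (- x)) 0"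
    by (simp add: vl.pprt_def vl.nprt_def vl.neg_inf_eq_sup sup_aci)
  also have "\<dots> = vabs x"
    using vl.zero_le_double_add_iff_zero_le_single_add[of "sup x (- x)"]
      add_mono[OF sup.cobounded1[of x "- x"] sup.cobounded2[of "- x" x]]
    by (simp add: vabs_def sup.absorb1)
  finally show ?thesis ..
qed

lemma vabs_nonneg: "0 \<le> vabs x"
  using order_trans[OF vl.nprt_le_zero vl.zero_le_pprt, of x x] by (simp add: vabs_eq_pprt_minus_nprt)

lemma vabs_le_iff: "vabs x \<le> y \<longleftrightarrow> x \<le> y \<and> - x \<le> y"
  by (simp add: vabs_def)

lemma vabs_ge_self: "x \<le> vabs x"
  by (simp add: vabs_def)

lemma vabs_minus: "vabs (- x) = vabs x"
  by (simp add: vabs_def sup.commute)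

lemma vabs_minus_commute: "vabs (x - y) = vabs (y - x)"
  using vabs_minus[of "x - y"] by simp

lemma vabs_triangle: "vabs (x + y) \<le> vabs x + vabs y"
  unfolding vabs_le_iff
  using add_mono[of x "vabs x" y "vabs y"] add_mono[of "- x" "vabs x" "- y" "vabs y"]
  by (simp add: vabs_def)

lemma vabs_of_nonneg: "0 \<le> x \<Longrightarrow> vabs x = x"
  by (simp add: vabs_def sup.absorb1 order_trans[of "- x" 0 x])

lemma vabs_eq_0_iff: "vabs x = 0 \<longleftrightarrow> x = 0"
  by (simp add: vabs_def)

lemma disjoint_nonneg:
  fixes x y :: "'a::{ordered_real_vector, lattice}"
  assumes "inf x y = 0" shows "0 \<le> x" "0 \<le> y"
  using inf.cobounded1[of x y] inf.cobounded2[of x y] assms by simp_all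

lemma pprt_diff_of_disjoint:
  fixes x y :: "'a::{ordered_real_vector, lattice}"
  assumes "inf x y = 0" shows "vl.pprt (x - y) = x"
proof -
  have "vl.pprt (x - y) = sup x y - y"
    using vl.add_sup_distrib_right[of x y "- y"] by (simp add: vl.pprt_def)
  also have "sup x y = x + y"
    using vl.add_eq_inf_sup[of x y] assms by simp
  finally show ?thesis by simp
qed

lemma vabs_diff_of_disjoint:
  fixes x y :: "'a::{ordered_real_vector, lattice}"
  assumes "inf x y = 0" shows "vabs (x - y) = x + y"
proof -
  have "vl.nprt (x - y) = - y"
    using vl.prts[of "x - y"] pprt_diff_of_disjoint[OF assms] by (simp add: algebra_simps eq_neg_iff_add_eq_0)
  then show ?thesis
    by (simp add: vabs_eq_pprt_minus_nprt pprt_diff_of_disjoint[OF assms])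
qed

lemma disjoint_mono:
  fixes x y :: "'a::{ordered_real_vector, lattice}"
  assumes "0 \<le> x" "x \<le> x'" "inf x' y = 0" shows "inf x y = 0"
  using assms disjoint_nonneg(2)[OF assms(3)] inf_mono[OF assms(2) order_refl, of y]
  by (simp add: antisym)

lemma disjoint_add_right:
  fixes x y z :: "'a::{ordered_real_vector, lattice}"
  assumes "0 \<le> y" "0 \<le> z" "inf x y = 0" "inf x z = 0"
  shows "inf x (y + z) = 0"
proof -
  let ?m = "inf x (y + z)"
  have "?m - y \<le> x"
    using add_increasing2[OF assms(1) inf.cobounded1[of x "y + z"]] by (simp add: diff_le_eq)
  moreover have "?m - y \<le> z"
    using inf.cobounded2[of x "y + z"] by (simp add: algebra_simps)
  ultimately have "?m - y \<le> 0"
    using assms(4) le_inf_iff by metis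
  then have "?m \<le> inf x y"
    by simp
  moreover have "0 \<le> ?m"
    using disjoint_nonneg(1)[OF assms(3)] assms(1,2) by simp
  ultimately show ?thesis
    using assms(3) by simp
qed

lemma disjoint_scaleR_right:
  fixes x y :: "'a::{ordered_real_vector, lattice}"
  assumes "0 \<le> c" "inf x y = 0"
  shows "inf x (c *\<^sub>R y) = 0"
proof -
  note x0 = disjoint_nonneg(1)[OF assms(2)] and y0 = disjoint_nonneg(2)[OF assms(2)]
  define M where "M = max c 1"
  let ?m = "inf x (c *\<^sub>R y)"
  have M: "1 \<le> M" "c \<le> M" "0 < M"
    by (simp_all add: M_def)
  have "inverse M *\<^sub>R ?m \<le> inverse M *\<^sub>R x"
    using M by (intro scaleR_left_mono) simp_all
  also have "\<dots> \<le> x"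
    using M x0 scaleR_right_mono[of "inverse M" 1 x] by (simp add: inverse_le_1_iff)
  finally have "inverse M *\<^sub>R ?m \<le> x" .
  moreover have "inverse M *\<^sub>R ?m \<le> inverse M *\<^sub>R (c *\<^sub>R y)"
    using M by (intro scaleR_left_mono) simp_all
  moreover have "inverse M *\<^sub>R (c *\<^sub>R y) \<le> y"
    using M y0 scaleR_right_mono[of "inverse M * c" 1 y] by (simp add: field_simps)
  ultimately have "inverse M *\<^sub>R ?m \<le> 0"
    using assms(2) le_inf_iff order_trans by metis
  then have "?m \<le> 0"
    using M scaleR_left_mono[of "inverse M *\<^sub>R ?m" 0 M] by simp
  moreover have "0 \<le> ?m"
    using x0 y0 assms(1) by (simp add: scaleR_nonneg_nonneg)
  ultimately show ?thesis
    by simp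
qed

lemma archimedean_vl_eq_0:
  assumes "archimedean_vl TYPE('a::{ordered_real_vector, lattice})"
    and "\<And>\<delta>. 0 < \<delta> \<Longrightarrow> vabs (x::'a) \<le> \<delta> *\<^sub>R e"
  shows "x = 0"
proof -
  have e0: "0 \<le> e"
    using assms(2)[of 1] vabs_nonneg[of x] by simp
  have "real n *\<^sub>R vabs x \<le> e" for n :: nat
  proof (cases "n = 0")
    case False
    then have "real n *\<^sub>R vabs x \<le> real n *\<^sub>R (inverse (real n) *\<^sub>R e)"
      using assms(2)[of "inverse (real n)"] by (intro scaleR_left_mono) simp_all
    with False show ?thesis
      by simp
  qed (simp add: e0)
  then have "vabs x = 0"
    using assms(1) e0 vabs_nonneg[of x] unfolding archimedean_vl_def by blast
  then show ?thesis
    by (simp add: vabs_eq_0_iff)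
qed

(* In a unital algebra, trunc_geom q v k would be q ((v - q)^+)^k. *)
fun trunc_geom :: "'a::{real_algebra, ordered_real_vector, lattice} \<Rightarrow> real \<Rightarrow> nat \<Rightarrow> 'a" where
  "trunc_geom q v 0 = q"
| "trunc_geom q v (Suc k) = vl.pprt (v *\<^sub>R trunc_geom q v k - q * trunc_geom q v k)"

lemma trunc_geom_add_mult:
  "trunc_geom q v k + q * trunc_geom q v k
     = (v + 1) *\<^sub>R trunc_geom q v k - trunc_geom q v (Suc k)
       + vl.pprt (q * trunc_geom q v k - v *\<^sub>R trunc_geom q v k)"
  using pprt_diff_pprt_uminus[of "v *\<^sub>R trunc_geom q v k - q * trunc_geom q v k"]
  by (simp add: algebra_simps)

context
  assumes f_algebra: "f_algebra TYPE('a::{real_algebra, ordered_real_vector, lattice})"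
begin

lemma f_mult_nonneg: "0 \<le> a \<Longrightarrow> 0 \<le> b \<Longrightarrow> 0 \<le> (a::'a) * b"
  using f_algebra unfolding f_algebra_def by blast

lemma f_disjoint_mult_left: "inf a b = 0 \<Longrightarrow> 0 \<le> c \<Longrightarrow> inf (c * a) (b::'a) = 0"
  using f_algebra unfolding f_algebra_def by blast

lemma f_disjoint_mult_right: "inf a b = 0 \<Longrightarrow> 0 \<le> c \<Longrightarrow> inf (a * c) (b::'a) = 0"
  using f_algebra unfolding f_algebra_def by blast

lemma f_mult_left_mono: "0 \<le> c \<Longrightarrow> x \<le> y \<Longrightarrow> c * x \<le> c * (y::'a)"
  using f_mult_nonneg[of c "y - x"] by (simp add: algebra_simps)

lemma f_mult_right_mono: "0 \<le> c \<Longrightarrow> x \<le> y \<Longrightarrow> x * c \<le> y * (c::'a)"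
  using f_mult_nonneg[of "y - x" c] by (simp add: algebra_simps)

lemma f_disjoint_imp_mult_eq_0:
  assumes "inf a b = (0::'a)" shows "a * b = 0"
proof -
  have "inf a (a * b) = 0"
    using f_disjoint_mult_left[of b a a] assms disjoint_nonneg(1)[OF assms]
    by (simp add: inf.commute)
  then have "inf (a * b) (a * b) = 0"
    using f_disjoint_mult_right[of a "a * b" b] disjoint_nonneg(2)[OF assms] by simp
  then show ?thesis
    by simp
qed

lemma f_disjoint_mult_both:
  assumes "inf a b = (0::'a)" "0 \<le> c" shows "inf (c * a) (c * b) = 0"
  using f_disjoint_mult_left[OF _ assms(2), of b "c * a"]
    f_disjoint_mult_left[OF assms] by (simp add: inf.commute)

lemma f_mult_pprt:
  assumes "0 \<le> (c::'a)"
  shows "c * vl.pprt x = vl.pprt (c * x)" "vl.pprt x * c = vl.pprt (x * c)"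
proof -
  let ?p = "vl.pprt x" and ?n = "- vl.nprt x"
  have x: "x = ?p - ?n"
    using vl.prts[of x] by simp
  have "inf (c * ?p) (c * ?n) = 0"
    using f_disjoint_mult_both[OF inf_pprt_neg_nprt assms] .
  then show "c * ?p = vl.pprt (c * x)"
    using pprt_diff_of_disjoint x by (metis right_diff_distrib)
  have "inf (?p * c) (?n * c) = 0"
    using f_disjoint_mult_right[OF inf_pprt_neg_nprt assms]
      f_disjoint_mult_right[OF _ assms, of ?n "?p * c"]
    by (simp add: inf.commute)
  then show "?p * c = vl.pprt (x * c)"
    using pprt_diff_of_disjoint x by (metis left_diff_distrib)
qed

lemma f_square_nonneg: "0 \<le> a * (a::'a)"
proof -
  let ?p = "vl.pprt a" and ?n = "- vl.nprt a"
  have "?p * ?n = 0" "?n * ?p = 0"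
    using f_disjoint_imp_mult_eq_0 inf_pprt_neg_nprt[of a] inf.commute by metis+
  moreover have "a * a = (?p - ?n) * (?p - ?n)"
    using vl.prts[of a] by simp
  ultimately have "a * a = ?p * ?p + ?n * ?n"
    by (simp add: ring_distribs)
  then show ?thesis
    using f_mult_nonneg[of ?p ?p] f_mult_nonneg[of ?n ?n] by (simp add: add_nonneg_nonneg)
qed

lemma f_mult_eq_mult_vabs:
  assumes "0 \<le> y" "y \<le> vl.pprt a"
  shows "y * a = y * vabs (a::'a)"
proof -
  have "y * vl.nprt a = 0"
    using f_disjoint_imp_mult_eq_0[OF disjoint_mono[OF assms inf_pprt_neg_nprt]] by simp
  then have "y * (vl.pprt a + vl.nprt a) = y * (vl.pprt a - vl.nprt a)"
    by (simp add: ring_distribs)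
  then show ?thesis
    by (metis vl.prts vabs_eq_pprt_minus_nprt)
qed

lemma f_vabs_mult_le: "0 \<le> c \<Longrightarrow> vabs (c * y) \<le> c * vabs (y::'a)"
  using f_mult_left_mono[of c y "vabs y"] f_mult_left_mono[of c "- y" "vabs y"]
  by (simp add: vabs_le_iff vabs_ge_self vabs_def)

lemma f_vabs_le_vabs_add_mult:
  assumes "0 \<le> q" shows "vabs y \<le> vabs (y + q * (y::'a))"
proof -
  let ?p = "vl.pprt y" and ?n = "- vl.nprt y"
  have pn: "inf ?p ?n = 0" and np: "inf ?n ?p = 0"
    using inf_pprt_neg_nprt[of y] by (simp_all add: inf.commute)
  have p0: "0 \<le> ?p" and n0: "0 \<le> ?n"
    by simp_all
  have qp0: "0 \<le> q * ?p" and qn0: "0 \<le> q * ?n"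
    using f_mult_nonneg[OF assms p0] f_mult_nonneg[OF assms n0] .
  have "inf ?n (q * ?p) = 0"
    using f_disjoint_mult_left[OF pn assms] by (simp add: inf.commute)
  then have "inf ?n (?p + q * ?p) = 0"
    by (rule disjoint_add_right[OF p0 qp0 np])
  moreover have "inf (q * ?n) (?p + q * ?p) = 0"
    using disjoint_add_right[OF p0 qp0 f_disjoint_mult_left[OF np assms]
        f_disjoint_mult_both[OF np assms]] .
  ultimately have disj: "inf (?p + q * ?p) (?n + q * ?n) = 0"
    using disjoint_add_right[OF n0 qn0, of "?p + q * ?p"] by (simp add: inf.commute)
  have "?p - ?n + q * (?p - ?n) = (?p + q * ?p) - (?n + q * ?n)"
    by (simp add: algebra_simps)
  then have "y + q * y = (?p + q * ?p) - (?n + q * ?n)"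
    using vl.prts[of y] by (metis diff_minus_eq_add)
  then have "vabs (y + q * y) = ?p + ?n + (q * ?p + q * ?n)"
    using vabs_diff_of_disjoint[OF disj] by (simp add: algebra_simps)
  moreover have "vabs y = ?p + ?n"
    by (simp add: vabs_eq_pprt_minus_nprt)
  ultimately show ?thesis
    using qp0 qn0 by (simp add: add_nonneg_nonneg)
qed

lemma ru_cauchy_of_approx_solutions:
  assumes q0: "0 \<le> q" and u0: "0 \<le> u" and eps: "eps \<longlonglongrightarrow> 0"
    and approx: "\<And>n. vabs (x n + q * x n - t) \<le> eps n *\<^sub>R (u::'a)"
  shows "ru_cauchy x"
  unfolding ru_cauchy_def
proof (intro exI[of _ u] conjI allI impI u0)
  fix \<epsilon> :: real
  assume "0 < \<epsilon>"
  then obtain N where N: "\<And>n. N \<le> n \<Longrightarrow> \<bar>eps n\<bar> < \<epsilon> / 2"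
    using LIMSEQ_D[OF eps, of "\<epsilon> / 2"] by auto
  have "vabs (x m - x n) \<le> \<epsilon> *\<^sub>R u" if "N \<le> m" "N \<le> n" for m n
  proof -
    have "vabs (x m - x n) \<le> vabs ((x m - x n) + q * (x m - x n))"
      by (rule f_vabs_le_vabs_add_mult[OF q0])
    also have "(x m - x n) + q * (x m - x n) = (x m + q * x m - t) + - (x n + q * x n - t)"
      by (simp add: algebra_simps)
    also have "vabs \<dots> \<le> vabs (x m + q * x m - t) + vabs (x n + q * x n - t)"
      using vabs_triangle[of "x m + q * x m - t" "- (x n + q * x n - t)"] unfolding vabs_minus .
    also have "\<dots> \<le> eps m *\<^sub>R u + eps n *\<^sub>R u"
      by (rule add_mono[OF approx approx])
    also have "\<dots> \<le> \<epsilon> *\<^sub>R u"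
      using N[OF that(1)] N[OF that(2)] u0
      by (simp flip: scaleR_add_left add: scaleR_right_mono)
    finally show ?thesis .
  qed
  then show "\<exists>N. \<forall>m\<ge>N. \<forall>n\<ge>N. vabs (x m - x n) \<le> \<epsilon> *\<^sub>R u"
    by blast
qed

lemma ru_limit_of_approx_solutions:
  assumes "archimedean_vl TYPE('a)"
    and q0: "0 \<le> q" and u0: "0 \<le> u" and eps: "eps \<longlonglongrightarrow> 0"
    and approx: "\<And>n. vabs (x n + q * x n - t) \<le> eps n *\<^sub>R (u::'a)"
    and "ru_converges x l"
  shows "l + q * l = t"
proof -
  obtain e where e0: "0 \<le> e" and conv: "\<And>\<delta>. 0 < \<delta> \<Longrightarrow> \<exists>N. \<forall>n\<ge>N. vabs (x n - l) \<le> \<delta> *\<^sub>R e"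
    using assms(6) unfolding ru_converges_def by blast
  have "vabs (l + q * l - t) \<le> \<delta> *\<^sub>R (e + q * e + u)" if \<delta>0: "0 < \<delta>" for \<delta>
  proof -
    obtain N1 where N1: "\<And>n. N1 \<le> n \<Longrightarrow> vabs (x n - l) \<le> \<delta> *\<^sub>R e"
      using conv[OF \<delta>0] by blast
    obtain N2 where N2: "\<And>n. N2 \<le> n \<Longrightarrow> \<bar>eps n\<bar> < \<delta>"
      using LIMSEQ_D[OF eps \<delta>0] by auto
    define n where "n = max N1 N2"
    have dist: "vabs (l - x n) \<le> \<delta> *\<^sub>R e"
      using N1[of n] by (simp add: n_def vabs_minus_commute)
    have "l + q * l - t = (l - x n) + q * (l - x n) + (x n + q * x n - t)"
      by (simp add: algebra_simps)
    also have "vabs \<dots> \<le> vabs (l - x n) + vabs (q * (l - x n)) + vabs (x n + q * x n - t)"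
      using vabs_triangle add_right_mono order_trans by blast
    also have "\<dots> \<le> \<delta> *\<^sub>R e + q * (\<delta> *\<^sub>R e) + \<delta> *\<^sub>R u"
    proof (intro add_mono dist)
      show "vabs (q * (l - x n)) \<le> q * (\<delta> *\<^sub>R e)"
        using f_vabs_mult_le[OF q0] f_mult_left_mono[OF q0 dist] by (rule order_trans)
      have "eps n \<le> \<delta>"
        using N2[of n] by (simp add: n_def)
      then show "vabs (x n + q * x n - t) \<le> \<delta> *\<^sub>R u"
        using approx[of n] scaleR_right_mono[OF _ u0] order_trans by blast
    qed
    also have "\<dots> = \<delta> *\<^sub>R (e + q * e + u)"
      by (simp add: scaleR_add_right)
    finally show ?thesis .
  qed
  then have "l + q * l - t = 0"
    by (rule archimedean_vl_eq_0[OF assms(1)])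
  then show ?thesis
    by simp
qed

context
  fixes q :: 'a and v :: real
  assumes q0: "0 \<le> q" and v0: "0 \<le> v"
begin

lemma trunc_geom_nonneg: "0 \<le> trunc_geom q v k"
  by (cases k) (simp_all add: q0)

lemma trunc_geom_commute: "q * trunc_geom q v k = trunc_geom q v k * q"
proof (induction k)
  case (Suc k)
  let ?W = "trunc_geom q v k"
  have "q * (v *\<^sub>R ?W - q * ?W) = (v *\<^sub>R ?W - q * ?W) * q"
    using Suc.IH by (simp add: algebra_simps flip: mult.assoc)
  then show ?case
    by (simp add: f_mult_pprt[OF q0])
qed simp

lemma trunc_geom_Suc_le: "trunc_geom q v (Suc k) \<le> v *\<^sub>R trunc_geom q v k"
  using f_mult_nonneg[OF q0 trunc_geom_nonneg[of k]] v0 trunc_geom_nonneg[of k]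
  by (simp add: vl.pprt_def scaleR_nonneg_nonneg)

lemma trunc_geom_le: "trunc_geom q v k \<le> (v ^ k) *\<^sub>R q"
proof (induction k)
  case (Suc k)
  have "trunc_geom q v (Suc k) \<le> v *\<^sub>R trunc_geom q v k"
    by (rule trunc_geom_Suc_le)
  also have "\<dots> \<le> v *\<^sub>R ((v ^ k) *\<^sub>R q)"
    using Suc.IH v0 by (rule scaleR_left_mono)
  finally show ?case
    by simp
qed simp

end

context
  assumes semiprime: "semiprime TYPE('a)"
begin

lemma nilpotent_eq_0: "npow a n = 0 \<Longrightarrow> (a::'a) = 0"
  using semiprime unfolding semiprime_def by blast

lemma f_mult_eq_0_imp_disjoint:
  assumes "0 \<le> x" "0 \<le> y" "x * y = (0::'a)"
  shows "inf x y = 0"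
proof -
  let ?m = "inf x y"
  have m0: "0 \<le> ?m"
    using assms by simp
  have "?m * ?m \<le> x * ?m"
    using f_mult_right_mono[OF m0, of ?m x] by simp
  also have "\<dots> \<le> x * y"
    using f_mult_left_mono[OF assms(1), of ?m y] by simp
  finally have "npow ?m 1 = 0"
    using assms(3) f_mult_nonneg[OF m0 m0] by simp
  then show ?thesis
    by (rule nilpotent_eq_0)
qed

lemma vabs_le_square_diff:
  assumes "vabs a \<le> vabs (a * a - a)"
  shows "vabs a \<le> a * a - (a::'a)"
proof -
  \<comment> \<open>The negative part y of w satisfies y a = y y, whence y y y = y a a = y w + y a = 0.\<close>
  define w where "w = a * a - a"
  define y where "y = - vl.nprt w"
  have y0: "0 \<le> y"
    by (simp add: y_def)
  have w: "w = vl.pprt w - y"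
    using vl.prts[of w] by (simp add: y_def)
  have "- w \<le> a"
    using f_square_nonneg[of a] by (simp add: w_def)
  then have y_le: "y \<le> vl.pprt a"
    using sup_mono[OF _ order_refl[of 0]]
    by (simp add: y_def vl.nprt_def vl.pprt_def vl.neg_inf_eq_sup)
  have "y * vl.pprt w = 0"
    using f_disjoint_imp_mult_eq_0 inf_pprt_neg_nprt[of w] unfolding y_def by (metis inf.commute)
  then have yw: "y * w = - (y * y)"
    by (subst w) (simp add: right_diff_distrib)
  have ya_eq: "y * a = y * vabs a"
    by (rule f_mult_eq_mult_vabs[OF y0 y_le])
  have "y * vabs a \<le> y * (vl.pprt w + y)"
    using f_mult_left_mono[OF y0] assms by (simp add: vabs_eq_pprt_minus_nprt y_def w_def)
  also have "\<dots> = y * y"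
    using \<open>y * vl.pprt w = 0\<close> by (simp add: distrib_left)
  finally have "y * a \<le> y * y"
    using ya_eq by simp
  moreover have "y * y \<le> y * vabs a"
    using f_mult_left_mono[OF y0] order_trans[OF y_le] vabs_eq_pprt_minus_nprt[of a]
    by (simp add: diff_ge_0_iff_ge vl.nprt_le_zero)
  ultimately have ya: "y * a = y * y"
    using ya_eq by simp
  have "y * (y * y) = y * (a * a)"
    using ya by (metis mult.assoc)
  also have "\<dots> = y * w + y * a"
    by (simp add: w_def ring_distribs)
  also have "\<dots> = 0"
    using yw ya by simp
  finally have "npow y 2 = 0"
    by (simp add: numeral_2_eq_2)
  then have "y = 0"
    by (rule nilpotent_eq_0)
  then have "vabs w = w"
    using w vl.zero_le_pprt[of w] by (metis diff_zero vabs_of_nonneg)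
  then show ?thesis
    using assms by (simp add: w_def)
qed

context
  fixes q :: 'a and v :: real
  assumes q0: "0 \<le> q" and v0: "0 \<le> v"
begin

lemma pprt_trunc_geom_Suc:
  "vl.pprt (q * trunc_geom q v (Suc k) - v *\<^sub>R trunc_geom q v (Suc k)) = 0"
proof -
  let ?V = "trunc_geom q v k"
  let ?Y = "v *\<^sub>R ?V - q * ?V"
  let ?P = "trunc_geom q v (Suc k)"
  let ?Z = "vl.pprt (q * ?P - v *\<^sub>R ?P)"
  \<comment> \<open>\<open>?Z\<close> is annihilated by \<open>?V\<close>, hence disjoint from it, yet dominated by \<open>v q ?V\<close>.\<close>
  have V0: "0 \<le> ?V" and P0: "0 \<le> ?P"
    using trunc_geom_nonneg[OF q0 v0] by blast+
  have "vl.nprt ?Y * ?P = 0"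
    using f_disjoint_imp_mult_eq_0[OF inf_pprt_neg_nprt[of ?Y, unfolded inf.commute[of "vl.pprt ?Y"]]]
    by simp
  then have "?Y * ?P = ?P * ?P"
    using vl.prts[of ?Y] by (metis add.right_neutral distrib_right trunc_geom.simps(2))
  then have "?V * (q * ?P - v *\<^sub>R ?P) = - (?P * ?P)"
    using trunc_geom_commute[OF q0 v0, of k] by (simp add: algebra_simps flip: mult.assoc)
  then have "?V * ?Z = 0"
    using f_mult_pprt(1)[OF V0] f_mult_nonneg[OF P0 P0] by simp
  then have "inf ?V ?Z = 0"
    by (rule f_mult_eq_0_imp_disjoint[OF V0 vl.zero_le_pprt])
  then have "inf ?Z (q * ?V) = 0"
    using f_disjoint_mult_left[OF _ q0, of ?V ?Z] by (simp add: inf.commute)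
  then have "inf ?Z (v *\<^sub>R (q * ?V)) = 0"
    by (rule disjoint_scaleR_right[OF v0])
  moreover have "?Z \<le> v *\<^sub>R (q * ?V)"
  proof -
    have "?Z \<le> vl.pprt (q * ?P)"
      using P0 v0 by (intro vl.pprt_mono) (simp add: scaleR_nonneg_nonneg)
    also have "\<dots> = q * ?P"
      using f_mult_nonneg[OF q0 P0] by simp
    also have "\<dots> \<le> q * (v *\<^sub>R ?V)"
      using f_mult_left_mono[OF q0 trunc_geom_Suc_le[OF q0 v0]] .
    finally show ?thesis
      by simp
  qed
  ultimately show ?thesis
    by (simp add: inf.absorb1)
qed

lemma trunc_geom_sum_add_mult:
  defines "c \<equiv> inverse (v + 1)"
  shows "(\<Sum>k\<le>K. c ^ (k + 1) *\<^sub>R trunc_geom q v k) + q * (\<Sum>k\<le>K. c ^ (k + 1) *\<^sub>R trunc_geom q v k)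
    = q + c *\<^sub>R vl.pprt (q * q - v *\<^sub>R q) - c ^ (K + 1) *\<^sub>R trunc_geom q v (Suc K)"
proof (induction K)
  case 0
  have "c *\<^sub>R (q + q * q) = c *\<^sub>R ((v + 1) *\<^sub>R q - trunc_geom q v 1 + vl.pprt (q * q - v *\<^sub>R q))"
    using trunc_geom_add_mult[of q v 0] by simp
  also have "\<dots> = q - c *\<^sub>R trunc_geom q v 1 + c *\<^sub>R vl.pprt (q * q - v *\<^sub>R q)"
    using v0 by (simp add: c_def scaleR_add_right scaleR_diff_right)
  finally show ?case
    by (simp add: scaleR_add_right algebra_simps)
next
  case (Suc K)
  let ?S = "\<Sum>k\<le>K. c ^ (k + 1) *\<^sub>R trunc_geom q v k"
  let ?W = "trunc_geom q v (Suc K)" and ?W' = "trunc_geom q v (Suc (Suc K))"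
  have step: "?W + q * ?W = (v + 1) *\<^sub>R ?W - ?W'"
    using trunc_geom_add_mult[of q v "Suc K"] pprt_trunc_geom_Suc[of K] by simp
  have c_pow: "c ^ (Suc K + 1) * (v + 1) = c ^ (K + 1)"
    using v0 by (simp add: c_def)
  have "(?S + c ^ (Suc K + 1) *\<^sub>R ?W) + q * (?S + c ^ (Suc K + 1) *\<^sub>R ?W)
      = (?S + q * ?S) + c ^ (Suc K + 1) *\<^sub>R (?W + q * ?W)"
    by (simp add: algebra_simps)
  also have "\<dots> = q + c *\<^sub>R vl.pprt (q * q - v *\<^sub>R q) - c ^ (Suc K + 1) *\<^sub>R ?W'"
    unfolding Suc.IH step scaleR_diff_right scaleR_scaleR c_pow by simp
  finally show ?case
    by simp
qed

lemma ex_approx_solution: "\<exists>x. vabs (x + q * x - q) \<le> inverse (v + 1) *\<^sub>R (q * q + q)"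
proof -
  define c where "c = inverse (v + 1)"
  define r where "r = c * v"
  have c0: "0 < c" and r0: "0 \<le> r" and r1: "r < 1"
    using v0 by (simp_all add: c_def r_def field_simps)
  obtain K where K: "r ^ K < c"
    using real_arch_pow_inv[OF c0 r1] by blast
  define E where "E = c *\<^sub>R vl.pprt (q * q - v *\<^sub>R q)"
  define T where "T = c ^ (K + 1) *\<^sub>R trunc_geom q v (Suc K)"
  define x where "x = (\<Sum>k\<le>K. c ^ (k + 1) *\<^sub>R trunc_geom q v k)"
  have "x + q * x - q = E - T"
    using trunc_geom_sum_add_mult[of K] by (simp add: x_def E_def T_def c_def)
  moreover have "0 \<le> E" "E \<le> c *\<^sub>R (q * q)"
  proof -
    have "vl.pprt (q * q - v *\<^sub>R q) \<le> vl.pprt (q * q)"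
      using q0 v0 by (intro vl.pprt_mono) (simp add: scaleR_nonneg_nonneg)
    then show "E \<le> c *\<^sub>R (q * q)"
      using c0 f_square_nonneg[of q] by (simp add: E_def scaleR_left_mono)
  qed (use c0 in \<open>simp add: E_def scaleR_nonneg_nonneg\<close>)
  moreover have "0 \<le> T" "T \<le> c *\<^sub>R q"
  proof -
    have "T \<le> c ^ (K + 1) *\<^sub>R ((v ^ (K + 1)) *\<^sub>R q)"
      unfolding T_def using c0 trunc_geom_le[OF q0 v0, of "Suc K"]
      by (intro scaleR_left_mono) simp_all
    also have "\<dots> = r ^ (K + 1) *\<^sub>R q"
      by (simp add: r_def power_mult_distrib)
    also have "\<dots> \<le> c *\<^sub>R q"
      using power_decreasing[of K "K + 1" r] r0 r1 K q0 by (intro scaleR_right_mono) simp_all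
    finally show "T \<le> c *\<^sub>R q" .
    show "0 \<le> T"
      using c0 trunc_geom_nonneg[OF q0 v0] by (simp add: T_def scaleR_nonneg_nonneg)
  qed
  ultimately have "vabs (x + q * x - q) \<le> c *\<^sub>R (q * q) + c *\<^sub>R q"
    using vabs_triangle[of E "- T"] by (simp add: vabs_minus vabs_of_nonneg add_mono order_trans)
  then show ?thesis
    by (auto simp: c_def scaleR_add_right)
qed

end

lemma ex_quasi_inverse_of_nonpos:
  assumes "archimedean_vl TYPE('a)" "ru_complete TYPE('a)" "a \<le> 0"
  shows "\<exists>b. a + b = a * (b::'a)"
proof -
  define q where "q = - a"
  have q0: "0 \<le> q"
    using assms(3) by (simp add: q_def)
  have u0: "0 \<le> q * q + q"
    using f_square_nonneg[of q] q0 by (rule add_nonneg_nonneg)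
  have "\<forall>n. \<exists>y. vabs (y + q * y - q) \<le> inverse (real (Suc n)) *\<^sub>R (q * q + q)"
    using ex_approx_solution[OF q0] by (metis of_nat_0_le_iff of_nat_Suc add.commute)
  then obtain x where x: "\<And>n. vabs (x n + q * x n - q) \<le> inverse (real (Suc n)) *\<^sub>R (q * q + q)"
    by metis
  note approx = q0 u0 LIMSEQ_inverse_real_of_nat x
  have "ru_cauchy x"
    by (rule ru_cauchy_of_approx_solutions[OF approx])
  then obtain l where "ru_converges x l"
    using assms(2) unfolding ru_complete_def by blast
  then have "l + q * l = q"
    by (rule ru_limit_of_approx_solutions[OF assms(1) approx])
  then have "a + l = a * l"
    by (simp add: q_def algebra_simps)
  then show ?thesis ..
qed

end

end

theorem theorem3:
  assumes "f_algebra TYPE('a::{real_algebra, ordered_real_vector, lattice})"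
    and "archimedean_vl TYPE('a)"
    and "semiprime TYPE('a)"
    and "ru_complete TYPE('a)"
  shows "\<forall>a :: 'a. vabs a \<le> vabs (a * a - a) \<longrightarrow> (\<exists>b :: 'a. a + b = a * b)"
proof (intro allI impI)
  fix a :: 'a
  assume "vabs a \<le> vabs (a * a - a)"
  then have "vabs a \<le> a * a - a"
    by (rule vabs_le_square_diff[OF assms(1,3)])
  then have "a + vabs a \<le> a * a"
    by (simp add: le_diff_eq add.commute)
  with add_left_mono[OF vabs_ge_self] have "a + a \<le> a * a"
    by (rule order_trans)
  then have "a + a - a * a \<le> 0"
    by simp
  then obtain c where c: "(a + a - a * a) + c = (a + a - a * a) * c"
    using ex_quasi_inverse_of_nonpos[OF assms(1,3,2,4)] by blast
  \<comment> \<open>With a unit: \<open>1 - (a + a - a a) = (1 - a)\<^sup>2\<close>, so take \<open>1 - b = (1 - a) (1 - c)\<close>.\<close>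
  have "a + (a + c - a * c) = a * (a + c - a * c)"
    using c by (simp add: algebra_simps)
  then show "\<exists>b. a + b = a * b" ..
qed

end
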